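(* Let $b\ge1$ be an integer not of the form $2^r$ or $3\cdot 2^r$ ($r\ge0$ an integer), and let $n=2b+3$. Then the codewords $|\bar0\rangle=\tfrac{1}{\sqrt{4b}}\big(\sqrt{4b-n}\,|D^n_0\rangle+\sqrt{n}\,|D^n_{2b}\rangle\big)$, $|\bar1\rangle=\tfrac{1}{\sqrt{4b}}\big(\sqrt{n}\,|D^n_3\rangle+\sqrt{4b-n}\,|D^n_n\rangle\big)$ span a non-additive permutationally invariant $((2b+3,2,3))$ $n$-qubit code with exotic transversal gates.
   Context: $|D^n_w\rangle$ denotes the $n$-qubit Dicke state: the normalized uniform superposition of all computational basis states of Hamming weight $w$. An $((n,K,d))$ code is a $K$-dimensional subspace of $n$ qubits such that for all codewords $|\phi\rangle,|\psi\rangle$ and every Pauli operator $E$ of weight $<d$, $\langle\phi|E|\psi\rangle=c_E\langle\phi|\psi\rangle$ with $c_E$ independent of the codewords. Non-additive means not a stabilizer code (a stabilizer code being the joint $+1$ eigenspace of an abelian subgroup of the Pauli group not containing $-I$). Permutationally invariant: every codeword is invariant under all qubit permutations. The (special) single-qubit Clifford hierarchy is defined by $\mathsf{C}^{(1)}=\langle\mathsf{X},\mathsf{Z}\rangle$ with $\mathsf{X}=\begin{pmatrix}0&-i\\-i&0\end{pmatrix}$, $\mathsf{Z}=\mathrm{diag}(-i,i)$, and $\mathsf{C}^{(r)}=\{\mathsf{U}\in\mathrm{SU}(2):\mathsf{U}\mathsf{C}^{(1)}\mathsf{U}^\dagger\subset\mathsf{C}^{(r-1)}\}$; a gate in $\mathrm{SU}(2)$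 is exotic if it lies in no $\mathsf{C}^{(r)}$. "Exotic transversal gates" means there is an exotic $g\in\mathrm{SU}(2)$ such that $g^{\otimes n}$ preserves the code and acts as a logical gate on it. *)

theory Defs
  imports Complex_Main
begin

text \<open>An n-qubit state is a function from basis indices to amplitudes; basis index i < 2^n
  encodes the computational basis state whose k-th qubit (k < n) is bit k of i.
  Amplitudes at indices >= 2^n are required to be 0.  Operators are functions
  nat => nat => complex, zero outside the square [0,2^n) x [0,2^n).\<close>

type_synonym qstate = "nat \<Rightarrow> complex"
type_synonym qop = "nat \<Rightarrow> nat \<Rightarrow> complex"

definition qvecs :: "nat \<Rightarrow> qstate set" where
  "qvecs n = {v. \<forall>i. 2 ^ n \<le> i \<longrightarrow> v i = 0}"

definition hweight :: "nat \<Rightarrow> nat \<Rightarrow> nat" where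
  "hweight n i = card {k. k < n \<and> bit i k}"

definition dicke :: "nat \<Rightarrow> nat \<Rightarrow> qstate" where
  "dicke n w = (\<lambda>i. if i < 2 ^ n \<and> hweight n i = w
                      then complex_of_real (1 / sqrt (real (n choose w))) else 0)"

definition qinner :: "nat \<Rightarrow> qstate \<Rightarrow> qstate \<Rightarrow> complex" where
  "qinner n u v = (\<Sum>i<2 ^ n. cnj (u i) * v i)"

definition qapply :: "nat \<Rightarrow> qop \<Rightarrow> qstate \<Rightarrow> qstate" where
  "qapply n A v = (\<lambda>i. if i < 2 ^ n then (\<Sum>j<2 ^ n. A i j * v j) else 0)"

definition qmult :: "nat \<Rightarrow> qop \<Rightarrow> qop \<Rightarrow> qop" where
  "qmult n A B = (\<lambda>i j. if i < 2 ^ n \<and> j < 2 ^ n then (\<Sum>k<2 ^ n. A i k * B k j) else 0)"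

definition qid :: "nat \<Rightarrow> qop" where
  "qid n = (\<lambda>i j. if i < 2 ^ n \<and> j < 2 ^ n \<and> i = j then 1 else 0)"

definition qscale :: "complex \<Rightarrow> qop \<Rightarrow> qop" where
  "qscale c A = (\<lambda>i j. c * A i j)"

datatype pauli = PI | PX | PY | PZ

text \<open>Matrix entries of single-qubit Paulis; index False = |0>, True = |1>.\<close>
fun pauli_entry :: "pauli \<Rightarrow> bool \<Rightarrow> bool \<Rightarrow> complex" where
  "pauli_entry PI a c = (if a = c then 1 else 0)"
| "pauli_entry PX a c = (if a \<noteq> c then 1 else 0)"
| "pauli_entry PY a c = (if a \<noteq> c then (if a then \<i> else - \<i>) else 0)"
| "pauli_entry PZ a c = (if a = c then (if a then -1 else 1) else 0)"

definition pauli_op :: "nat \<Rightarrow> pauli list \<Rightarrow> qop" where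
  "pauli_op n ps = (\<lambda>i j. if i < 2 ^ n \<and> j < 2 ^ n
                          then (\<Prod>k<n. pauli_entry (ps ! k) (bit i k) (bit j k)) else 0)"

definition pauli_weight :: "pauli list \<Rightarrow> nat" where
  "pauli_weight ps = length (filter (\<lambda>p. p \<noteq> PI) ps)"

definition pauli_group :: "nat \<Rightarrow> qop set" where
  "pauli_group n = {qscale (\<i> ^ m) (pauli_op n ps) | m ps. length ps = n}"

definition qecc_distance :: "nat \<Rightarrow> qstate set \<Rightarrow> nat \<Rightarrow> bool" where
  "qecc_distance n C d \<longleftrightarrow>
     (\<forall>ps. length ps = n \<and> pauli_weight ps < d \<longrightarrow>
        (\<exists>c. \<forall>\<phi>\<in>C. \<forall>\<psi>\<in>C. qinner n \<phi> (qapply n (pauli_op n ps) \<psi>) = c * qinner n \<phi> \<psi>))"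

definition span2 :: "qstate \<Rightarrow> qstate \<Rightarrow> qstate set" where
  "span2 u v = {w. \<exists>\<alpha> \<beta>. w = (\<lambda>i. \<alpha> * u i + \<beta> * v i)}"

definition lin_indep2 :: "qstate \<Rightarrow> qstate \<Rightarrow> bool" where
  "lin_indep2 u v \<longleftrightarrow> (\<forall>\<alpha> \<beta>. (\<lambda>i. \<alpha> * u i + \<beta> * v i) = (\<lambda>i. 0) \<longrightarrow> \<alpha> = 0 \<and> \<beta> = 0)"

definition is_code_n2d :: "nat \<Rightarrow> nat \<Rightarrow> qstate \<Rightarrow> qstate \<Rightarrow> bool" where
  "is_code_n2d n d u v \<longleftrightarrow> u \<in> qvecs n \<and> v \<in> qvecs n \<and> lin_indep2 u v
                          \<and> qecc_distance n (span2 u v) d"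

text \<open>Stabilizer codes: joint +1 eigenspace of an abelian subgroup S of the Pauli group
  with -I not in S.  (S is finite, so a nonempty subset closed under products is a subgroup.)\<close>
definition abelian_pauli_subgroup :: "nat \<Rightarrow> qop set \<Rightarrow> bool" where
  "abelian_pauli_subgroup n S \<longleftrightarrow>
     S \<subseteq> pauli_group n \<and> qid n \<in> S \<and>
     (\<forall>A\<in>S. \<forall>B\<in>S. qmult n A B \<in> S) \<and>
     (\<forall>A\<in>S. \<forall>B\<in>S. qmult n A B = qmult n B A)"

definition stabilizer_space :: "nat \<Rightarrow> qop set \<Rightarrow> qstate set" where
  "stabilizer_space n S = {v \<in> qvecs n. \<forall>A\<in>S. qapply n A v = v}"

definition is_stabilizer_code :: "nat \<Rightarrow> qstate set \<Rightarrow> bool" where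
  "is_stabilizer_code n C \<longleftrightarrow>
     (\<exists>S. abelian_pauli_subgroup n S \<and> qscale (-1) (qid n) \<notin> S \<and> C = stabilizer_space n S)"

definition non_additive :: "nat \<Rightarrow> qstate set \<Rightarrow> bool" where
  "non_additive n C \<longleftrightarrow> \<not> is_stabilizer_code n C"

text \<open>Qubit permutation sigma acting on basis index i: qubit k moves to position sigma k.\<close>
definition perm_index :: "nat \<Rightarrow> (nat \<Rightarrow> nat) \<Rightarrow> nat \<Rightarrow> nat" where
  "perm_index n \<sigma> i = (\<Sum>k<n. if bit i k then 2 ^ (\<sigma> k) else 0)"

definition perm_invariant :: "nat \<Rightarrow> qstate set \<Rightarrow> bool" where
  "perm_invariant n C \<longleftrightarrow>
     (\<forall>\<sigma>. bij_betw \<sigma> {..<n} {..<n} \<longrightarrow>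
        (\<forall>v\<in>C. \<forall>i<2 ^ n. v (perm_index n \<sigma> i) = v i))"

type_synonym mat2 = "bool \<Rightarrow> bool \<Rightarrow> complex"

definition m2mult :: "mat2 \<Rightarrow> mat2 \<Rightarrow> mat2" where
  "m2mult A B = (\<lambda>a c. A a False * B False c + A a True * B True c)"

definition m2adj :: "mat2 \<Rightarrow> mat2" where
  "m2adj A = (\<lambda>a c. cnj (A c a))"

definition m2id :: mat2 where
  "m2id = (\<lambda>a c. if a = c then 1 else 0)"

definition m2det :: "mat2 \<Rightarrow> complex" where
  "m2det A = A False False * A True True - A False True * A True False"

definition SU2 :: "mat2 set" where
  "SU2 = {U. m2mult U (m2adj U) = m2id \<and> m2det U = 1}"

definition sX :: mat2 where
  "sX = (\<lambda>a c. if a \<noteq> c then - \<i> else 0)"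

definition sZ :: mat2 where
  "sZ = (\<lambda>a c. if a = c then (if a then \<i> else - \<i>) else 0)"

text \<open>C^(1) = group generated by X and Z (finite, so the monoid closure is the group).\<close>
inductive_set cliff1 :: "mat2 set" where
  one: "m2id \<in> cliff1"
| genX: "sX \<in> cliff1"
| genZ: "sZ \<in> cliff1"
| mult: "A \<in> cliff1 \<Longrightarrow> B \<in> cliff1 \<Longrightarrow> m2mult A B \<in> cliff1"

text \<open>cliff r = C^(r) for r >= 1 (cliff 0 is unused).\<close>
fun cliff :: "nat \<Rightarrow> mat2 set" where
  "cliff 0 = {}"
| "cliff (Suc 0) = cliff1"
| "cliff (Suc (Suc r)) =
     {U \<in> SU2. \<forall>P\<in>cliff1. m2mult (m2mult U P) (m2adj U) \<in> cliff (Suc r)}"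

definition exotic :: "mat2 \<Rightarrow> bool" where
  "exotic g \<longleftrightarrow> g \<in> SU2 \<and> (\<forall>r\<ge>1. g \<notin> cliff r)"

definition tensor_power :: "nat \<Rightarrow> mat2 \<Rightarrow> qop" where
  "tensor_power n g = (\<lambda>i j. if i < 2 ^ n \<and> j < 2 ^ n
                              then (\<Prod>k<n. g (bit i k) (bit j k)) else 0)"

text \<open>g^{(x)n} preserves the code (being unitary, it then acts as a logical gate).\<close>
definition has_exotic_transversal :: "nat \<Rightarrow> qstate set \<Rightarrow> bool" where
  "has_exotic_transversal n C \<longleftrightarrow>
     (\<exists>g. exotic g \<and> (\<forall>v\<in>C. qapply n (tensor_power n g) v \<in> C))"

definition codeword0 :: "nat \<Rightarrow> qstate" where
  "codeword0 b = (let n = 2 * b + 3 in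
     (\<lambda>i. complex_of_real (1 / sqrt (real (4 * b))) *
          (complex_of_real (sqrt (real (4 * b) - real n)) * dicke n 0 i
           + complex_of_real (sqrt (real n)) * dicke n (2 * b) i)))"

definition codeword1 :: "nat \<Rightarrow> qstate" where
  "codeword1 b = (let n = 2 * b + 3 in
     (\<lambda>i. complex_of_real (1 / sqrt (real (4 * b))) *
          (complex_of_real (sqrt (real n)) * dicke n 3 i
           + complex_of_real (sqrt (real (4 * b) - real n)) * dicke n n i)))"

end

theory Submission
  imports Defs "HOL-Computational_Algebra.Primes"
begin

text \<open>
  Both codewords are real combinations of Dicke states, hence permutation invariant, and flipping
  all qubits maps |0> to |1>.  A Pauli error E of weight at most 2 sends a basis state of Hamming
  weight w to one of weight w + |x| - 2s, where x is the set of qubits E flips and s \<le> |x|; the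
  supports {0, 2b} and {3, 2b+3} of the codewords are too far apart for this, so <0|E|1> = 0.
  Flipping all qubits gives <1|E|1> = (-1)^(#Y+#Z) <0|E|0>, and transposition (the codewords are
  real) kills the terms with #Y odd.  Of the remaining errors, X_p Z_q changes the parity of the
  weight, and the single Z_p is where the amplitudes are tuned: <D_w|Z_p|D_w> = 1 - 2w/n, so
  <0|Z_p|0> = ((4b - n) + (n - 4b)) / 4b = 0.

  A Pauli operator fixing |0> cannot flip qubits: its flip pattern would have weight 2b and would
  then map some weight-2b basis state to one of weight 2.  Hence every stabilizer of the code
  also fixes |0...0>, which is not a codeword.  Finally diag(conj u, u)^(tensor n), with
  u = exp(i pi / 2b), multiplies a weight-w basis state by u^w (conj u)^(n-w), which is constant
  on the support of each codeword because u^(2b) = -1.  Conjugating X by a diagonal gate squares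
  its phase, so a diagonal gate in the Clifford hierarchy has u^(2^j) = 1 for some j, which forces
  b to be a power of 2.
\<close>

unbundle bit_operations_syntax

definition qubit_set :: "nat \<Rightarrow> nat \<Rightarrow> nat set" where
  "qubit_set n i = {k. k < n \<and> bit i k}"

definition set_index :: "nat set \<Rightarrow> nat" where
  "set_index A = (\<Sum>k\<in>A. 2 ^ k)"

lemma bit_set_index: "finite A \<Longrightarrow> bit (set_index A) k \<longleftrightarrow> k \<in> A"
proof (induction A arbitrary: k rule: finite_induct)
  case empty
  then show ?case by (simp add: set_index_def)
next
  case (insert x A)
  have "set_index (insert x A) = 2 ^ x OR set_index A"
    using insert by (simp add: set_index_def disjunctive_add bit_exp_iff)
  then show ?case using insert by (auto simp: bit_or_iff bit_exp_iff)
qed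

lemma nat_less_power_iff_bits: "(i::nat) < 2 ^ n \<longleftrightarrow> (\<forall>k. bit i k \<longrightarrow> k < n)"
proof -
  have "take_bit n i = i \<longleftrightarrow> (\<forall>k. bit i k \<longrightarrow> k < n)"
    by (auto simp: bit_eq_iff bit_take_bit_iff)
  then show ?thesis by (simp add: take_bit_nat_eq_self_iff)
qed

lemma bit_less_power: "(i::nat) < 2 ^ n \<Longrightarrow> bit i k \<Longrightarrow> k < n"
  by (simp add: nat_less_power_iff_bits)

lemma xor_less_power: "(i::nat) < 2 ^ n \<Longrightarrow> j < 2 ^ n \<Longrightarrow> i XOR j < 2 ^ n"
  by (auto simp: nat_less_power_iff_bits bit_xor_iff)

lemma set_index_less: "A \<subseteq> {..<n} \<Longrightarrow> set_index A < 2 ^ n"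
  using bit_set_index[of A] finite_subset[of A "{..<n}"] by (auto simp: nat_less_power_iff_bits)

lemma qubit_set_set_index: "A \<subseteq> {..<n} \<Longrightarrow> qubit_set n (set_index A) = A"
  using bit_set_index[of A] finite_subset[of A "{..<n}"] by (auto simp: qubit_set_def)

lemma set_index_qubit_set: "i < 2 ^ n \<Longrightarrow> set_index (qubit_set n i) = i"
  by (rule bit_eqI) (auto simp: bit_set_index qubit_set_def nat_less_power_iff_bits)

lemma qubit_set_subset: "qubit_set n i \<subseteq> {..<n}"
  by (auto simp: qubit_set_def)

lemma finite_qubit_set [simp]: "finite (qubit_set n i)"
  using finite_subset[OF qubit_set_subset] by blast

lemma qubit_set_xor: "qubit_set n (i XOR j) = (qubit_set n i - qubit_set n j)
    \<union> (qubit_set n j - qubit_set n i)"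
  by (auto simp: qubit_set_def bit_xor_iff)

lemma hweight_qubit_set: "hweight n i = card (qubit_set n i)"
  by (simp add: hweight_def qubit_set_def)

lemma hweight_le: "hweight n i \<le> n"
  unfolding hweight_qubit_set using card_mono[OF finite_lessThan qubit_set_subset] by simp

lemma hweight_eq_0_iff: "i < 2 ^ n \<Longrightarrow> hweight n i = 0 \<longleftrightarrow> i = 0"
  by (auto simp: hweight_def card_eq_0_iff bit_eq_iff[of i 0] dest: bit_less_power)

lemma hweight_mask:
  assumes "m \<le> n"
  shows "hweight n (mask m :: nat) = m"
proof -
  have "{k. k < n \<and> bit (mask m :: nat) k} = {..<m}"
    using assms by (auto simp: bit_mask_iff)
  then show ?thesis by (simp add: hweight_def)
qed

lemma mask_less_power: "m \<le> n \<Longrightarrow> mask m < (2::nat) ^ n"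
  by (simp add: nat_less_power_iff_bits bit_mask_iff)

lemma hweight_xor_mask:
  assumes "i < 2 ^ n"
  shows "hweight n (i XOR mask n) = n - hweight n i"
proof -
  have "qubit_set n (i XOR mask n) = {..<n} - qubit_set n i"
    by (auto simp: qubit_set_def bit_xor_iff bit_mask_iff)
  then show ?thesis
    by (simp add: hweight_qubit_set card_Diff_subset qubit_set_subset)
qed

lemma hweight_xor:
  "hweight n (i XOR j) + 2 * card (qubit_set n i \<inter> qubit_set n j) = hweight n i + hweight n j"
proof -
  let ?A = "qubit_set n i" and ?B = "qubit_set n j"
  have "card ((?A - ?B) \<union> (?B - ?A)) = card (?A - ?B) + card (?B - ?A)"
    by (intro card_Un_disjoint) auto
  moreover have "card ?A = card (?A - ?B) + card (?A \<inter> ?B)"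
    using card_Int_Diff[of ?A ?B] by simp
  moreover have "card ?B = card (?B - ?A) + card (?A \<inter> ?B)"
    using card_Int_Diff[of ?B ?A] by (simp add: Int_commute)
  ultimately show ?thesis by (simp add: hweight_qubit_set qubit_set_xor)
qed

lemma bij_betw_qubit_set: "bij_betw (qubit_set n) {..<2 ^ n} (Pow {..<n})"
  by (rule bij_betw_byWitness[where f' = set_index])
     (auto simp: set_index_qubit_set qubit_set_set_index set_index_less
           dest: subsetD[OF qubit_set_subset])

lemma sum_xor_reindex:
  assumes "(j::nat) < 2 ^ n"
  shows "(\<Sum>i<2 ^ n. f (i XOR j)) = (\<Sum>i<2 ^ n. f i :: 'a::comm_monoid_add)"
  by (rule sum.reindex_bij_witness[where i = "\<lambda>i. i XOR j" and j = "\<lambda>i. i XOR j"])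
     (use assms in \<open>auto simp: xor_less_power xor.assoc\<close>)

lemma card_indices_eq_card_subsets:
  "card {i. i < 2 ^ n \<and> P (qubit_set n i)} = card {A. A \<subseteq> {..<n} \<and> P A}"
proof -
  have "{A. A \<subseteq> {..<n} \<and> P A} = qubit_set n ` {i. i < 2 ^ n \<and> P (qubit_set n i)}"
  proof (intro equalityI subsetI)
    fix A assume "A \<in> {A. A \<subseteq> {..<n} \<and> P A}"
    then show "A \<in> qubit_set n ` {i. i < 2 ^ n \<and> P (qubit_set n i)}"
      by (auto simp: image_iff qubit_set_set_index set_index_less intro!: exI[of _ "set_index A"])
  qed (use qubit_set_subset in auto)
  moreover have "inj_on (qubit_set n) {i. i < 2 ^ n \<and> P (qubit_set n i)}"
    using bij_betw_imp_inj_on[OF bij_betw_qubit_set] by (rule inj_on_subset) auto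
  ultimately show ?thesis by (simp add: card_image)
qed

lemma card_hweight_eq: "card {i. i < 2 ^ n \<and> hweight n i = w} = n choose w"
  using card_indices_eq_card_subsets[of n "\<lambda>A. card A = w"]
  by (simp add: hweight_qubit_set n_subsets)

lemma card_hweight_eq_bit:
  assumes "p < n"
  shows "n * card {i. i < 2 ^ n \<and> hweight n i = w \<and> bit i p} = w * (n choose w)"
proof -
  have "{i. i < 2 ^ n \<and> hweight n i = w \<and> bit i p}
      = {i. i < 2 ^ n \<and> card (qubit_set n i) = w \<and> p \<in> qubit_set n i}"
    using assms by (auto simp: hweight_qubit_set qubit_set_def)
  then have card_eq: "card {i. i < 2 ^ n \<and> hweight n i = w \<and> bit i p}
      = card {A. A \<subseteq> {..<n} \<and> card A = w \<and> p \<in> A}"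
    using card_indices_eq_card_subsets[of n "\<lambda>A. card A = w \<and> p \<in> A"] by simp
  show ?thesis
  proof (cases w)
    case 0
    then have "{A. A \<subseteq> {..<n} \<and> card A = w \<and> p \<in> A} = {}"
      using finite_subset[of _ "{..<n}"] by fastforce
    then show ?thesis using 0 card_eq by simp
  next
    case (Suc v)
    have "bij_betw (\<lambda>A. A - {p}) {A. A \<subseteq> {..<n} \<and> card A = w \<and> p \<in> A}
        {C. C \<subseteq> {..<n} - {p} \<and> card C = v}"
    proof (rule bij_betw_byWitness[where f' = "insert p"])
      show "insert p ` {C. C \<subseteq> {..<n} - {p} \<and> card C = v} \<subseteq> {A. A \<subseteq> {..<n} \<and> card A = w \<and> p \<in> A}"
      proof (rule image_subsetI)
        fix C assume "C \<in> {C. C \<subseteq> {..<n} - {p} \<and> card C = v}"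
        then have C: "C \<subseteq> {..<n} - {p}" "card C = v" by simp_all
        then have "finite C" "p \<notin> C" using finite_subset by blast+
        then show "insert p C \<in> {A. A \<subseteq> {..<n} \<and> card A = w \<and> p \<in> A}"
          using C Suc assms by auto
      qed
    qed (use Suc in auto)
    then have "card {A. A \<subseteq> {..<n} \<and> card A = w \<and> p \<in> A} = (n - 1) choose v"
      using assms by (simp add: bij_betw_same_card n_subsets)
    then show ?thesis using card_eq Suc binomial_absorption[of v n] by simp
  qed
qed

definition x_mask :: "nat \<Rightarrow> pauli list \<Rightarrow> nat" where
  "x_mask n ps = set_index {k. k < n \<and> (ps ! k = PX \<or> ps ! k = PY)}"

definition pauli_phase :: "nat \<Rightarrow> pauli list \<Rightarrow> nat \<Rightarrow> complex" where
  "pauli_phase n ps i = (\<Prod>k<n. pauli_entry (ps ! k) (bit i k) (bit (i XOR x_mask n ps) k))"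

definition pauli_count :: "nat \<Rightarrow> pauli list \<Rightarrow> pauli \<Rightarrow> nat" where
  "pauli_count n ps P = card {k. k < n \<and> ps ! k = P}"

lemma bit_x_mask: "bit (x_mask n ps) k \<longleftrightarrow> k < n \<and> (ps ! k = PX \<or> ps ! k = PY)"
  unfolding x_mask_def by (subst bit_set_index) auto

lemma x_mask_less: "x_mask n ps < 2 ^ n"
  unfolding x_mask_def by (rule set_index_less) auto

lemma qapply_pauli_op:
  "qapply n (pauli_op n ps) v i =
      (if i < 2 ^ n then pauli_phase n ps i * v (i XOR x_mask n ps) else 0)"
proof (cases "i < 2 ^ n")
  case True
  let ?j = "i XOR x_mask n ps"
  have "pauli_op n ps i j = 0" if "j < 2 ^ n" "j \<noteq> ?j" for j
  proof -
    obtain k where k: "bit j k \<noteq> bit ?j k"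
      using \<open>j \<noteq> ?j\<close> bit_eq_iff by blast
    then have "k < n"
      using bit_less_power[OF that(1)] bit_less_power[OF xor_less_power[OF True x_mask_less]]
      by blast
    moreover have "pauli_entry (ps ! k) (bit i k) (bit j k) = 0"
      using k \<open>k < n\<close> by (cases "ps ! k") (auto simp: bit_xor_iff bit_x_mask)
    ultimately show ?thesis by (simp add: pauli_op_def) blast
  qed
  then have "(\<Sum>j<2 ^ n. pauli_op n ps i j * v j) = pauli_op n ps i ?j * v ?j"
    using xor_less_power[OF True x_mask_less] by (subst sum.remove[of _ ?j]) auto
  then show ?thesis
    using True xor_less_power[OF True x_mask_less]
        by (simp add: qapply_def pauli_op_def pauli_phase_def)
qed (simp add: qapply_def)

lemma qinner_pauli_op:
  "qinner n u (qapply n (pauli_op n ps) v) =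
      (\<Sum>i<2 ^ n. cnj (u i) * pauli_phase n ps i * v (i XOR x_mask n ps))"
  unfolding qinner_def qapply_pauli_op by (rule sum.cong) auto

lemma qinner_pauli_op_identity:
  "qinner n u (qapply n (pauli_op n (replicate n PI)) v) = qinner n u v"
proof -
  have mask_0: "x_mask n (replicate n PI) = 0"
    by (rule bit_eqI) (auto simp: bit_x_mask)
  moreover have "pauli_phase n (replicate n PI) i = 1" for i
    by (simp add: pauli_phase_def mask_0)
  ultimately show ?thesis
    unfolding qinner_pauli_op by (simp add: qinner_def)
qed

lemma qapply_pauli_op_Z_at:
  assumes "p < n" and "\<forall>k<n. ps ! k = (if k = p then PZ else PI)"
  shows "qapply n (pauli_op n ps) v i =
      (if i < 2 ^ n then (if bit i p then -1 else 1) * v i else 0)"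
proof -
  have mask_0: "x_mask n ps = 0"
    by (rule bit_eqI) (use assms in \<open>auto simp: bit_x_mask\<close>)
  have "pauli_phase n ps i = (\<Prod>k<n. if k = p then (if bit i p then -1 else 1) else 1)"
    unfolding pauli_phase_def mask_0 by (rule prod.cong) (use assms in auto)
  also have "\<dots> = (if bit i p then -1 else 1)"
    using assms(1) by simp
  finally show ?thesis by (simp add: qapply_pauli_op mask_0)
qed

lemma hweight_x_mask: "hweight n (x_mask n ps) = pauli_count n ps PX + pauli_count n ps PY"
proof -
  have "{k. k < n \<and> bit (x_mask n ps) k} = {k. k < n \<and> ps ! k = PX} \<union> {k. k < n \<and> ps ! k = PY}"
    by (auto simp: bit_x_mask)
  then show ?thesis
    unfolding hweight_def pauli_count_def by (simp add: card_Un_disjoint disjoint_iff)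
qed

lemma pauli_weight_eq_counts:
  assumes "length ps = n"
  shows "pauli_weight ps = pauli_count n ps PX + pauli_count n ps PY + pauli_count n ps PZ"
proof -
  have "{k. k < n \<and> ps ! k \<noteq> PI}
      = {k. k < n \<and> ps ! k = PX} \<union> {k. k < n \<and> ps ! k = PY} \<union> {k. k < n \<and> ps ! k = PZ}"
    by (auto intro: pauli.exhaust)
  moreover have "pauli_weight ps = card {k. k < n \<and> ps ! k \<noteq> PI}"
    using assms by (simp add: pauli_weight_def length_filter_conv_card)
  ultimately show ?thesis
    unfolding pauli_count_def by (simp add: card_Un_disjoint disjoint_iff)
qed

lemma prod_sign_eq_power:
  "(\<Prod>k<(n::nat). if P k then -1 else 1)
   = (-1 :: 'a::comm_ring_1) ^ card {k. k < n \<and> P k}"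
proof -
  have "(\<Prod>k<n. if P k then -1 else 1) = (\<Prod>k\<in>{..<n} \<inter> {k. P k}. -1 :: 'a)
      * (\<Prod>k\<in>{..<n} \<inter> - {k. P k}. 1)"
    by (rule prod.If_cases) (rule finite_lessThan)
  moreover have "{..<n} \<inter> {k. P k} = {k. k < n \<and> P k}" by auto
  ultimately show ?thesis by simp
qed

lemma pauli_entry_swap: "pauli_entry P y x = (if P = PY then -1 else 1) * pauli_entry P x y"
  by (cases P) auto

lemma pauli_entry_Not:
  "pauli_entry P (\<not> x) (\<not> y)
   = (if P = PY \<or> P = PZ then -1 else 1) * pauli_entry P x y"
  by (cases P) auto

lemma pauli_phase_xor_x_mask:
  "pauli_phase n ps (i XOR x_mask n ps) = (-1) ^ pauli_count n ps PY * pauli_phase n ps i"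
proof -
  let ?m = "x_mask n ps"
  have "pauli_phase n ps (i XOR ?m) = (\<Prod>k<n. pauli_entry (ps ! k) (bit (i XOR ?m) k) (bit i k))"
    by (simp add: pauli_phase_def xor.assoc)
  also have "\<dots> = (\<Prod>k<n. (if ps ! k = PY then -1 else 1)
      * pauli_entry (ps ! k) (bit i k) (bit (i XOR ?m) k))"
    by (rule prod.cong) (simp_all add: pauli_entry_swap[of _ "bit (i XOR ?m) _"])
  finally show ?thesis
    by (simp add: prod.distrib prod_sign_eq_power pauli_count_def pauli_phase_def)
qed

lemma pauli_phase_xor_mask:
  "pauli_phase n ps (i XOR mask n) = (-1) ^ (pauli_count n ps PY + pauli_count n ps PZ)
      * pauli_phase n ps i"
proof -
  let ?m = "x_mask n ps"
  have "pauli_phase n ps (i XOR mask n) =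
      (\<Prod>k<n. pauli_entry (ps ! k) (\<not> bit i k) (\<not> bit (i XOR ?m) k))"
    unfolding pauli_phase_def by (rule prod.cong) (auto simp: bit_xor_iff bit_mask_iff)
  also have "\<dots> = (\<Prod>k<n. (if ps ! k = PY \<or> ps ! k = PZ then -1 else 1)
      * pauli_entry (ps ! k) (bit i k) (bit (i XOR ?m) k))"
    by (rule prod.cong) (simp_all add: pauli_entry_Not)
  also have "\<dots> = (-1) ^ card ({k. k < n \<and> ps ! k = PY} \<union> {k. k < n \<and> ps ! k = PZ})
      * pauli_phase n ps i"
    by (simp add: prod.distrib prod_sign_eq_power
        pauli_phase_def Collect_disj_eq[symmetric] conj_disj_distribL)
  finally show ?thesis
    by (simp add: pauli_count_def card_Un_disjoint disjoint_iff)
qed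

lemma qinner_pauli_op_real_self:
  assumes "\<And>i. cnj (u i) = u i"
  shows "qinner n u (qapply n (pauli_op n ps) u)
      = (-1) ^ pauli_count n ps PY * qinner n u (qapply n (pauli_op n ps) u)"
proof -
  let ?m = "x_mask n ps"
  let ?f = "\<lambda>i. u i * pauli_phase n ps i * u (i XOR ?m)"
  have "(\<Sum>i<2 ^ n. ?f i) = (\<Sum>i<2 ^ n. ?f (i XOR ?m))"
    using sum_xor_reindex[OF x_mask_less, of ?f] by simp
  also have "\<dots> = (\<Sum>i<2 ^ n. (-1) ^ pauli_count n ps PY * ?f i)"
    by (simp add: pauli_phase_xor_x_mask xor.assoc mult_ac)
  finally show ?thesis
    by (simp add: qinner_pauli_op assms sum_distrib_left[symmetric])
qed

lemma qinner_pauli_op_complement: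
  assumes "\<And>i. i < 2 ^ n \<Longrightarrow> v i = u (i XOR mask n)"
  shows "qinner n v (qapply n (pauli_op n ps) v)
       = (-1) ^ (pauli_count n ps PY + pauli_count n ps PZ)
           * qinner n u (qapply n (pauli_op n ps) u)"
proof -
  let ?m = "x_mask n ps"
  let ?f = "\<lambda>i. cnj (u i) * pauli_phase n ps (i XOR mask n) * u (i XOR ?m)"
  have "(\<Sum>i<2 ^ n. cnj (v i) * pauli_phase n ps i * v (i XOR ?m)) = (\<Sum>i<2 ^ n. ?f (i XOR mask n))"
  proof (rule sum.cong)
    fix i :: nat assume "i \<in> {..<2 ^ n}"
    then have "i < 2 ^ n" "i XOR ?m < 2 ^ n"
      using xor_less_power[OF _ x_mask_less] by auto
    then show "cnj (v i) * pauli_phase n ps i * v (i XOR ?m) = ?f (i XOR mask n)"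
      by (simp add: assms xor.assoc xor.commute[of "mask n"])
  qed simp
  also have "\<dots> = (\<Sum>i<2 ^ n. ?f i)"
    by (rule sum_xor_reindex) simp
  finally show ?thesis
    by (simp add: qinner_pauli_op pauli_phase_xor_mask sum_distrib_left mult_ac)
qed

text \<open>Here s counts the flipped qubits that were set, cf. \<open>hweight_xor\<close>.\<close>

lemma qinner_pauli_op_eq_0_if_weights_apart:
  assumes "\<And>i. u i \<noteq> 0 \<Longrightarrow> P (hweight n i)" and "\<And>i. v i \<noteq> 0 \<Longrightarrow> Q (hweight n i)"
    and "\<And>w w' s. P w \<Longrightarrow> Q w' \<Longrightarrow> s \<le> hweight n (x_mask n ps)
           \<Longrightarrow> w' + 2 * s = w + hweight n (x_mask n ps) \<Longrightarrow> False"
  shows "qinner n u (qapply n (pauli_op n ps) v) = 0"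
proof -
  have "u i = 0 \<or> v (i XOR x_mask n ps) = 0" for i
  proof -
    have "card (qubit_set n i \<inter> qubit_set n (x_mask n ps)) \<le> hweight n (x_mask n ps)"
      unfolding hweight_qubit_set by (rule card_mono) auto
    then show ?thesis
      using assms hweight_xor[of n i "x_mask n ps"] by blast
  qed
  then show ?thesis
    unfolding qinner_pauli_op by (intro sum.neutral) auto
qed

lemma perm_index_eq_set_index:
  assumes "bij_betw \<sigma> {..<n} {..<n}"
  shows "perm_index n \<sigma> i = set_index (\<sigma> ` qubit_set n i)"
proof -
  have "inj_on \<sigma> (qubit_set n i)"
    using bij_betw_imp_inj_on[OF assms] qubit_set_subset by (rule inj_on_subset)
  moreover have "perm_index n \<sigma> i = (\<Sum>k\<in>qubit_set n i. 2 ^ \<sigma> k)"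
    unfolding perm_index_def qubit_set_def
        by (subst sum.inter_filter[symmetric]) (auto intro: sum.cong)
  ultimately show ?thesis
    by (simp add: set_index_def sum.reindex)
qed

lemma perm_index_less_and_hweight:
  assumes "bij_betw \<sigma> {..<n} {..<n}" and "i < 2 ^ n"
  shows "perm_index n \<sigma> i < 2 ^ n" and "hweight n (perm_index n \<sigma> i) = hweight n i"
proof -
  have sub: "\<sigma> ` qubit_set n i \<subseteq> {..<n}"
    using qubit_set_subset bij_betw_imp_surj_on[OF assms(1)] by blast
  have "inj_on \<sigma> (qubit_set n i)"
    using bij_betw_imp_inj_on[OF assms(1)] qubit_set_subset by (rule inj_on_subset)
  then show "perm_index n \<sigma> i < 2 ^ n" and "hweight n (perm_index n \<sigma> i) = hweight n i"
    unfolding perm_index_eq_set_index[OF assms(1)] hweight_qubit_set qubit_set_set_index[OF sub]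
    by (simp_all add: set_index_less[OF sub] card_image)
qed

lemma dicke_perm_index:
  assumes "bij_betw \<sigma> {..<n} {..<n}" and "i < 2 ^ n"
  shows "dicke n w (perm_index n \<sigma> i) = dicke n w i"
  using perm_index_less_and_hweight[OF assms] assms(2) by (simp add: dicke_def)

lemma cnj_dicke [simp]: "cnj (dicke n w i) = dicke n w i"
  by (simp add: dicke_def)

lemma dicke_xor_mask:
  assumes "i < 2 ^ n" and "w \<le> n"
  shows "dicke n w (i XOR mask n) = dicke n (n - w) i"
proof -
  have "hweight n (i XOR mask n) = w \<longleftrightarrow> hweight n i = n - w"
    using hweight_xor_mask[OF assms(1)] hweight_le[of n i] assms(2) by auto
  then show ?thesis
    using xor_less_power[OF assms(1), of "mask n"] assms binomial_symmetric[OF assms(2)]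
    by (simp add: dicke_def)
qed

lemma qinner_dicke_Z_at:
  assumes "p < n" and "\<forall>k<n. ps ! k = (if k = p then PZ else PI)" and "w \<le> n"
  shows "qinner n (dicke n w) (qapply n (pauli_op n ps) (dicke n w'))
       = (if w = w' then 1 - 2 * of_nat w / of_nat n else 0)"
proof -
  define C where "C = real (n choose w)"
  define W where "W = card {i. i < 2 ^ n \<and> hweight n i = w}"
  define Wp where "Wp = card {i. i < 2 ^ n \<and> hweight n i = w \<and> bit i p}"
  have C_pos: "C > 0" using assms(3) by (simp add: C_def)
  have W: "real W = C" and Wp: "real n * real Wp = real w * C"
    unfolding W_def Wp_def C_def using card_hweight_eq card_hweight_eq_bit[OF assms(1)]
    by (simp_all, metis of_nat_mult)
  have sqrt_sq: "(complex_of_real (sqrt (real k)))\<^sup>2 = of_nat k" for k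
    by (metis of_real_of_nat_eq of_real_power of_nat_0_le_iff real_sqrt_pow2)
  have summand: "cnj (dicke n w i) * qapply n (pauli_op n ps) (dicke n w') i
      = (if w = w' then of_real (1 / C)
          * (of_bool (hweight n i = w) - 2 * of_bool (hweight n i = w \<and> bit i p))
          else 0)"
    if "i < 2 ^ n" for i
    using that C_pos
        by (auto simp: qapply_pauli_op_Z_at[OF assms(1,2)]
        dicke_def C_def power2_eq_square[symmetric] sqrt_sq)
  show ?thesis
  proof (cases "w = w'")
    case True
    define c where "c = complex_of_real (1 / C)"
    have "qinner n (dicke n w) (qapply n (pauli_op n ps) (dicke n w'))
        = (\<Sum>i<2 ^ n. c * (of_bool (hweight n i = w) - 2 * of_bool (hweight n i = w \<and> bit i p)))"
      unfolding qinner_def c_def using summand True by (intro sum.cong) auto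
    also have "\<dots> = c * ((\<Sum>i<2 ^ n. of_bool (hweight n i = w))
        - 2 * (\<Sum>i<2 ^ n. of_bool (hweight n i = w \<and> bit i p)))"
      by (simp only: sum_distrib_left[symmetric] sum_subtractf)
    also have "\<dots> = c * (of_nat W - 2 * of_nat Wp)"
      by (simp add: W_def Wp_def Int_def lessThan_def conj_commute)
    also have "\<dots> = of_real ((C - 2 * real Wp) / C)"
      using W[symmetric] by (simp add: c_def field_simps)
    also have "(C - 2 * real Wp) / C = 1 - 2 * real w / real n"
      using Wp C_pos assms(1) by (simp add: field_simps)
    finally show ?thesis using True by simp
  qed (use summand in \<open>auto simp: qinner_def intro!: sum.neutral\<close>)
qed

lemma qinner_lincomb_left:
  "qinner n (\<lambda>i. a * u i + c * v i) w = cnj a * qinner n u w + cnj c * qinner n v w"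
  by (simp add: qinner_def sum.distrib sum_distrib_left algebra_simps)

lemma qinner_lincomb_right:
  "qinner n w (\<lambda>i. a * u i + c * v i) = a * qinner n w u + c * qinner n w v"
  by (simp add: qinner_def sum.distrib sum_distrib_left algebra_simps)

lemma qapply_lincomb:
  "qapply n A (\<lambda>i. a * u i + c * v i) = (\<lambda>i. a * qapply n A u i + c * qapply n A v i)"
  by (auto simp: qapply_def sum.distrib sum_distrib_left algebra_simps)

lemma cnj_codeword0 [simp]: "cnj (codeword0 b i) = codeword0 b i"
  by (simp add: codeword0_def Let_def)

lemma cnj_codeword1 [simp]: "cnj (codeword1 b i) = codeword1 b i"
  by (simp add: codeword1_def Let_def)

lemma codeword0_neq_0_imp:
  "codeword0 b i \<noteq> 0 \<Longrightarrow> i < 2 ^ (2 * b + 3)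
      \<and> (hweight (2 * b + 3) i = 0 \<or> hweight (2 * b + 3) i = 2 * b)"
  by (auto simp: codeword0_def dicke_def Let_def split: if_splits)

lemma codeword1_neq_0_imp:
  "codeword1 b i \<noteq> 0 \<Longrightarrow> i < 2 ^ (2 * b + 3)
      \<and> (hweight (2 * b + 3) i = 3 \<or> hweight (2 * b + 3) i = 2 * b + 3)"
  by (auto simp: codeword1_def dicke_def Let_def split: if_splits)

lemma codeword0_neq_0:
  assumes "b \<ge> 2" and "i < 2 ^ (2 * b + 3)"
      and "hweight (2 * b + 3) i = 0 \<or> hweight (2 * b + 3) i = 2 * b"
  shows "codeword0 b i \<noteq> 0"
proof -
  have "0 < 1 / sqrt (real (4 * b)) * sqrt (real (4 * b) - real (2 * b + 3))"
    and "0 < 1 / sqrt (real (4 * b))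
        * (sqrt (real (2 * b + 3)) * (1 / sqrt (real ((2 * b + 3) choose (2 * b)))))"
    using assms(1) by (auto intro!: mult_pos_pos)
  then show ?thesis
    using assms by (auto simp: codeword0_def dicke_def Let_def simp del: of_nat_mult)
qed

lemma codeword1_eq_codeword0_xor_mask:
  assumes "i < 2 ^ (2 * b + 3)"
  shows "codeword1 b i = codeword0 b (i XOR mask (2 * b + 3))"
  using dicke_xor_mask[OF assms, of 0] dicke_xor_mask[OF assms, of "2 * b"]
  by (simp add: codeword0_def codeword1_def Let_def algebra_simps)

lemma qinner_codeword0_Z_at:
  assumes "b \<ge> 2" and "p < 2 * b + 3" and "\<forall>k<2 * b + 3. ps ! k = (if k = p then PZ else PI)"
  shows "qinner (2 * b + 3) (codeword0 b)
      (qapply (2 * b + 3) (pauli_op (2 * b + 3) ps) (codeword0 b)) = 0"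
proof -
  let ?n = "2 * b + 3"
  define \<alpha> where "\<alpha> = sqrt (real (4 * b) - real ?n) / sqrt (real (4 * b))"
  define \<beta> where "\<beta> = sqrt (real ?n) / sqrt (real (4 * b))"
  have "codeword0 b = (\<lambda>i. of_real \<alpha> * dicke ?n 0 i + of_real \<beta> * dicke ?n (2 * b) i)"
    by (simp add: codeword0_def \<alpha>_def \<beta>_def Let_def algebra_simps)
  moreover have "qinner ?n (dicke ?n w) (qapply ?n (pauli_op ?n ps) (dicke ?n w'))
      = (if w = w' then 1 - 2 * of_nat w / of_nat ?n else 0)" if "w \<le> ?n" for w w'
    using qinner_dicke_Z_at[OF assms(2,3) that] .
  ultimately have "qinner ?n (codeword0 b) (qapply ?n (pauli_op ?n ps) (codeword0 b))
      = of_real (\<alpha>\<^sup>2 + \<beta>\<^sup>2 * (1 - 2 * real (2 * b) / real ?n))"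
    using assms(1)
        by (simp add: qapply_lincomb qinner_lincomb_left qinner_lincomb_right power2_eq_square)
  also have "\<alpha>\<^sup>2 + \<beta>\<^sup>2 * (1 - 2 * real (2 * b) / real ?n) = 0"
  proof -
    have \<alpha>_sq: "\<alpha>\<^sup>2 = (real (4 * b) - real ?n) / real (4 * b)"
        and \<beta>_sq: "\<beta>\<^sup>2 = real ?n / real (4 * b)"
      using assms(1) by (simp_all add: \<alpha>_def \<beta>_def power_divide)
    have "\<alpha>\<^sup>2 + \<beta>\<^sup>2 = 1"
      unfolding \<alpha>_sq \<beta>_sq using assms(1) by (simp add: field_simps)
    moreover have "\<beta>\<^sup>2 * (2 * real (2 * b) / real ?n)
        = (real ?n / real (4 * b)) * (real (4 * b) / real ?n)"
      unfolding \<beta>_sq by simp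
    moreover have "\<dots> = 1" using assms(1) by simp
    ultimately show ?thesis by (simp add: right_diff_distrib)
  qed
  finally show ?thesis by simp
qed

lemma qinner_codeword0_single_Z:
  assumes b: "b \<ge> 2"
    and counts: "pauli_count (2 * b + 3) ps PX \<le> 1" "pauli_count (2 * b + 3) ps PY = 0"
      "pauli_count (2 * b + 3) ps PZ = 1"
  shows "qinner (2 * b + 3) (codeword0 b)
      (qapply (2 * b + 3) (pauli_op (2 * b + 3) ps) (codeword0 b)) = 0"
proof (cases "pauli_count (2 * b + 3) ps PX = 0")
  case True
  let ?n = "2 * b + 3"
  obtain p where p: "{k. k < ?n \<and> ps ! k = PZ} = {p}"
    using counts(3) card_1_singletonE unfolding pauli_count_def by blast
  have "{k. k < ?n \<and> ps ! k = PX} = {}" "{k. k < ?n \<and> ps ! k = PY} = {}"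
    using True counts(2) by (simp_all add: pauli_count_def)
  then have "\<forall>k<?n. ps ! k = (if k = p then PZ else PI)"
    using p by (auto intro: pauli.exhaust)
  moreover have "p < ?n" using p by auto
  ultimately show ?thesis using qinner_codeword0_Z_at b by simp
next
  case False
  then have "hweight (2 * b + 3) (x_mask (2 * b + 3) ps) = 1"
    using counts by (simp add: hweight_x_mask)
  then show ?thesis
    by (intro qinner_pauli_op_eq_0_if_weights_apart[where P = "\<lambda>w. w = 0 \<or> w = 2 * b"
          and Q = "\<lambda>w. w = 0 \<or> w = 2 * b"])
       (use codeword0_neq_0_imp in \<open>auto, presburger+\<close>)
qed

lemma codewords_knill_laflamme:
  assumes b: "b \<ge> 3" and len: "length ps = 2 * b + 3" and wt: "pauli_weight ps \<le> 2"
  defines "E \<equiv> qapply (2 * b + 3) (pauli_op (2 * b + 3) ps)"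
  shows "qinner (2 * b + 3) (codeword0 b) (E (codeword1 b)) = 0"
    and "qinner (2 * b + 3) (codeword1 b) (E (codeword0 b)) = 0"
    and "qinner (2 * b + 3) (codeword1 b) (E (codeword1 b))
        = qinner (2 * b + 3) (codeword0 b) (E (codeword0 b))"
proof -
  let ?n = "2 * b + 3"
  define cX where "cX = pauli_count ?n ps PX"
  define cY where "cY = pauli_count ?n ps PY"
  define cZ where "cZ = pauli_count ?n ps PZ"
  have counts: "cX + cY + cZ \<le> 2"
    using pauli_weight_eq_counts[OF len] wt by (simp add: cX_def cY_def cZ_def)
  have flips: "hweight ?n (x_mask ?n ps) = cX + cY"
    by (simp add: hweight_x_mask cX_def cY_def)
  show "qinner ?n (codeword0 b) (E (codeword1 b)) = 0"
    unfolding E_def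
    by (rule qinner_pauli_op_eq_0_if_weights_apart[where P = "\<lambda>w. w = 0 \<or> w = 2 * b"
        and Q = "\<lambda>w. w = 3 \<or> w = 2 * b + 3"])
       (use codeword0_neq_0_imp codeword1_neq_0_imp flips counts b in auto)
  show "qinner ?n (codeword1 b) (E (codeword0 b)) = 0"
    unfolding E_def
    by (rule qinner_pauli_op_eq_0_if_weights_apart[where P = "\<lambda>w. w = 3 \<or> w = 2 * b + 3"
        and Q = "\<lambda>w. w = 0 \<or> w = 2 * b"])
       (use codeword0_neq_0_imp codeword1_neq_0_imp flips counts b in auto)
  have complement: "qinner ?n (codeword1 b) (E (codeword1 b))
      = (-1) ^ (cY + cZ) * qinner ?n (codeword0 b) (E (codeword0 b))"
    unfolding E_def cY_def cZ_def
        by (rule qinner_pauli_op_complement) (rule codeword1_eq_codeword0_xor_mask)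
  show "qinner ?n (codeword1 b) (E (codeword1 b)) = qinner ?n (codeword0 b) (E (codeword0 b))"
  proof (cases "even cY")
    case False
    then have "qinner ?n (codeword0 b) (E (codeword0 b)) = 0"
        "qinner ?n (codeword1 b) (E (codeword1 b)) = 0"
      using qinner_pauli_op_real_self[of "codeword0 b" ?n ps]
          qinner_pauli_op_real_self[of "codeword1 b" ?n ps]
      by (auto simp: E_def cY_def)
    then show ?thesis by simp
  next
    case True
    show ?thesis
    proof (cases "even cZ")
      case True
      then show ?thesis using complement \<open>even cY\<close> by simp
    next
      case False
      then have "cZ = 1" "cY = 0" using \<open>even cY\<close> counts by presburger+
      then have "qinner ?n (codeword0 b) (E (codeword0 b)) = 0"
        using counts b qinner_codeword0_single_Z[of b ps] by (simp add: E_def cX_def cY_def cZ_def)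
      then show ?thesis using complement by simp
    qed
  qed
qed

lemma qecc_distance_span2I:
  assumes "qinner n u u \<noteq> 0" and "d > 0"
    and KL: "\<And>ps. length ps = n \<Longrightarrow> pauli_weight ps < d \<Longrightarrow>
      qinner n u (qapply n (pauli_op n ps) v) = 0 \<and> qinner n v (qapply n (pauli_op n ps) u) = 0 \<and>
      qinner n v (qapply n (pauli_op n ps) v) = qinner n u (qapply n (pauli_op n ps) u)"
  shows "qecc_distance n (span2 u v) d"
  unfolding qecc_distance_def
proof (intro allI impI)
  fix ps :: "pauli list" assume ps: "length ps = n \<and> pauli_weight ps < d"
  let ?E = "qapply n (pauli_op n ps)"
  have "length (replicate n PI) = n" "pauli_weight (replicate n PI) < d"
    using \<open>d > 0\<close> by (simp_all add: pauli_weight_def)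
  from KL[OF this] have orth: "qinner n u v = 0" "qinner n v u = 0" "qinner n v v = qinner n u u"
    by (simp_all add: qinner_pauli_op_identity)
  show "\<exists>c. \<forall>\<phi>\<in>span2 u v. \<forall>\<psi>\<in>span2 u v. qinner n \<phi> (?E \<psi>) = c * qinner n \<phi> \<psi>"
  proof (intro exI ballI)
    fix \<phi> \<psi> assume "\<phi> \<in> span2 u v" "\<psi> \<in> span2 u v"
    then obtain a1 b1 a2 b2 where "\<phi> = (\<lambda>i. a1 * u i + b1 * v i)" "\<psi> = (\<lambda>i. a2 * u i + b2 * v i)"
      by (auto simp: span2_def)
    then show "qinner n \<phi> (?E \<psi>) = qinner n u (?E u) / qinner n u u * qinner n \<phi> \<psi>"
      using KL[of ps] ps orth assms(1)
      by (simp add: qapply_lincomb qinner_lincomb_left qinner_lincomb_right field_simps)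
  qed
qed

lemma qinner_codeword0_self_neq_0:
  assumes "b \<ge> 2"
  shows "qinner (2 * b + 3) (codeword0 b) (codeword0 b) \<noteq> 0"
proof -
  have "qinner (2 * b + 3) (codeword0 b) (codeword0 b)
      = of_real (\<Sum>i<2 ^ (2 * b + 3). (cmod (codeword0 b i))\<^sup>2)"
    unfolding qinner_def of_real_sum
    by (intro sum.cong) (simp_all only: complex_norm_square mult.commute)
  moreover have "0 < (cmod (codeword0 b 0))\<^sup>2"
    using codeword0_neq_0[OF assms, of 0] by (simp add: hweight_def)
  moreover have "(cmod (codeword0 b 0))\<^sup>2 \<le> (\<Sum>i<2 ^ (2 * b + 3). (cmod (codeword0 b i))\<^sup>2)"
    by (rule member_le_sum) auto
  ultimately show ?thesis by (metis not_less of_real_eq_0_iff)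
qed

lemma lin_indep2_codewords:
  assumes "b \<ge> 2"
  shows "lin_indep2 (codeword0 b) (codeword1 b)"
  unfolding lin_indep2_def
proof (intro allI impI)
  let ?n = "2 * b + 3"
  fix \<alpha> \<beta> assume zero: "(\<lambda>i. \<alpha> * codeword0 b i + \<beta> * codeword1 b i) = (\<lambda>i. 0)"
  have "codeword0 b 0 \<noteq> 0" "codeword1 b 0 = 0"
    using codeword0_neq_0[OF assms, of 0] codeword1_neq_0_imp[of b 0] by (auto simp: hweight_def)
  moreover have "codeword1 b (mask ?n) \<noteq> 0"
    using codeword1_eq_codeword0_xor_mask[of "mask ?n" b] codeword0_neq_0[OF assms, of 0]
    by (simp add: hweight_def)
  moreover have "codeword0 b (mask ?n) = 0"
    using codeword0_neq_0_imp[of b "mask ?n"] hweight_mask[of ?n ?n] by auto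
  ultimately show "\<alpha> = 0 \<and> \<beta> = 0"
    using fun_cong[OF zero, of 0] fun_cong[OF zero, of "mask ?n"] by simp
qed

lemma is_code_codewords:
  assumes "b \<ge> 3"
  shows "is_code_n2d (2 * b + 3) 3 (codeword0 b) (codeword1 b)"
  unfolding is_code_n2d_def
proof (intro conjI)
  show "codeword0 b \<in> qvecs (2 * b + 3)" "codeword1 b \<in> qvecs (2 * b + 3)"
    using codeword0_neq_0_imp codeword1_neq_0_imp by (auto simp: qvecs_def not_less[symmetric])
  show "lin_indep2 (codeword0 b) (codeword1 b)"
    using assms by (intro lin_indep2_codewords) simp
  show "qecc_distance (2 * b + 3) (span2 (codeword0 b) (codeword1 b)) 3"
    using assms codewords_knill_laflamme[OF assms]
    by (intro qecc_distance_span2I qinner_codeword0_self_neq_0) auto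
qed

lemma perm_invariant_codewords: "perm_invariant (2 * b + 3) (span2 (codeword0 b) (codeword1 b))"
  unfolding perm_invariant_def span2_def
  by (auto simp: codeword0_def codeword1_def Let_def dicke_perm_index)

lemma qapply_qscale: "qapply n (qscale c A) v = (\<lambda>i. c * qapply n A v i)"
  by (auto simp: qapply_def qscale_def sum_distrib_left mult.assoc)

lemma pauli_fixed_state_imp_diagonal:
  assumes supp: "\<And>i. i < 2 ^ n \<Longrightarrow> v i \<noteq> 0 \<longleftrightarrow> hweight n i = 0 \<or> hweight n i = w"
    and w: "0 < w" "w < n" "w \<noteq> 2"
    and fixed: "qapply n (qscale \<rho> (pauli_op n ps)) v = v"
  shows "x_mask n ps = 0"
proof (rule ccontr)
  let ?m = "x_mask n ps"
  assume "?m \<noteq> 0"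
  have m_less: "?m < 2 ^ n" by (rule x_mask_less)
  have eq: "v j = \<rho> * pauli_phase n ps j * v (j XOR ?m)" if "j < 2 ^ n" for j
    using fun_cong[OF fixed, of j] that by (simp add: qapply_qscale qapply_pauli_op mult.assoc)
  have "v 0 \<noteq> 0" using supp[of 0] by (simp add: hweight_def)
  moreover have "v 0 = \<rho> * pauli_phase n ps 0 * v ?m"
    using eq[of 0] by simp
  ultimately have "v ?m \<noteq> 0" by auto
  then have "hweight n ?m = w"
    using supp[OF m_less] hweight_eq_0_iff[OF m_less] \<open>?m \<noteq> 0\<close> by blast
  then have card_B: "card (qubit_set n ?m) = w" by (simp add: hweight_qubit_set)
  then have "qubit_set n ?m \<noteq> {}" and "{..<n} - qubit_set n ?m \<noteq> {}"
    using \<open>0 < w\<close> \<open>w < n\<close> card_mono[OF finite_qubit_set, of "{..<n}" n ?m] by auto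
  then obtain p q where p: "p \<in> qubit_set n ?m" and q: "q < n" "q \<notin> qubit_set n ?m"
    by blast
  \<comment> \<open>moving the 1 at p to q keeps the weight w but leaves only p, q to be flipped\<close>
  define A where "A = insert q (qubit_set n ?m - {p})"
  have A_sub: "A \<subseteq> {..<n}" using q p qubit_set_subset by (auto simp: A_def)
  let ?j = "set_index A"
  have j: "?j < 2 ^ n" "qubit_set n ?j = A"
    using set_index_less[OF A_sub] qubit_set_set_index[OF A_sub] by simp_all
  have "card A = w"
    using p q card_B \<open>0 < w\<close> by (simp add: A_def card_Diff_singleton)
  then have "v ?j \<noteq> 0" using supp[OF j(1)] j(2) by (simp add: hweight_qubit_set)
  have "qubit_set n (?j XOR ?m) = {p, q}"
    unfolding qubit_set_xor j(2) using p q by (auto simp: A_def)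
  moreover have "p \<noteq> q" using p q by blast
  ultimately have "hweight n (?j XOR ?m) = 2"
    by (simp add: hweight_qubit_set)
  then have "v (?j XOR ?m) = 0"
    using supp[OF xor_less_power[OF j(1) m_less]] w by auto
  then show False using eq[OF j(1)] \<open>v ?j \<noteq> 0\<close> by simp
qed

lemma pauli_fixing_state_fixes_ket0:
  assumes supp: "\<And>i. i < 2 ^ n \<Longrightarrow> v i \<noteq> 0 \<longleftrightarrow> hweight n i = 0 \<or> hweight n i = w"
    and w: "0 < w" "w < n" "w \<noteq> 2"
    and fixed: "qapply n (qscale \<rho> (pauli_op n ps)) v = v"
  defines "ket0 \<equiv> \<lambda>i::nat. if i = 0 then 1 else 0 :: complex"
  shows "qapply n (qscale \<rho> (pauli_op n ps)) ket0 = ket0"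
proof -
  have diag: "x_mask n ps = 0"
    using pauli_fixed_state_imp_diagonal[OF supp w fixed] .
  have "v 0 = \<rho> * pauli_phase n ps 0 * v 0"
    using fun_cong[OF fixed, of 0] by (simp add: qapply_qscale qapply_pauli_op diag mult.assoc)
  moreover have "v 0 \<noteq> 0" using supp[of 0] by (simp add: hweight_def)
  ultimately have "\<rho> * pauli_phase n ps 0 = 1" by simp
  then show ?thesis
    by (auto simp: qapply_qscale qapply_pauli_op diag ket0_def)
qed

lemma non_additive_codewords:
  assumes "b \<ge> 2"
  shows "non_additive (2 * b + 3) (span2 (codeword0 b) (codeword1 b))"
  unfolding non_additive_def is_stabilizer_code_def
proof
  let ?n = "2 * b + 3"
  define ket0 where "ket0 = (\<lambda>i::nat. if i = 0 then 1 else 0 :: complex)"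
  assume "\<exists>S. abelian_pauli_subgroup ?n S \<and> qscale (-1) (qid ?n) \<notin> S
            \<and> span2 (codeword0 b) (codeword1 b) = stabilizer_space ?n S"
  then obtain S where S: "S \<subseteq> pauli_group ?n"
    and code: "span2 (codeword0 b) (codeword1 b) = stabilizer_space ?n S"
    unfolding abelian_pauli_subgroup_def by blast
  have supp: "codeword0 b i \<noteq> 0 \<longleftrightarrow> hweight ?n i = 0 \<or> hweight ?n i = 2 * b" if "i < 2 ^ ?n" for i
    using codeword0_neq_0_imp codeword0_neq_0[OF assms that] by blast
  have "codeword0 b \<in> stabilizer_space ?n S"
    unfolding code[symmetric] span2_def by (rule CollectI, rule exI[of _ 1], rule exI[of _ 0]) simp
  have "qapply ?n A ket0 = ket0" if A_in: "A \<in> S" for A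
  proof -
    obtain \<rho> ps where A: "A = qscale \<rho> (pauli_op ?n ps)"
      using A_in S unfolding pauli_group_def by blast
    have "qapply ?n A (codeword0 b) = codeword0 b"
      using \<open>codeword0 b \<in> stabilizer_space ?n S\<close> A_in by (simp add: stabilizer_space_def)
    then show ?thesis
      unfolding A ket0_def using assms
      by (intro pauli_fixing_state_fixes_ket0[OF supp]) auto
  qed
  then have "ket0 \<in> span2 (codeword0 b) (codeword1 b)"
    unfolding code by (simp add: stabilizer_space_def qvecs_def ket0_def)
  then obtain \<alpha> \<beta> where ket0: "ket0 = (\<lambda>i. \<alpha> * codeword0 b i + \<beta> * codeword1 b i)"
    unfolding span2_def by blast
  have weight: "hweight ?n (mask (2 * b)) = 2 * b" "2 * b \<noteq> 3"
    using hweight_mask[of "2 * b" ?n] by presburger+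
  have "codeword1 b 0 = 0" "codeword1 b (mask (2 * b)) = 0"
    using codeword1_neq_0_imp[of b 0] codeword1_neq_0_imp[of b "mask (2 * b)"] weight
    by (auto simp: hweight_def[of _ 0])
  moreover have "codeword0 b (mask (2 * b)) \<noteq> 0"
    using codeword0_neq_0[OF assms] weight mask_less_power[of "2 * b" ?n] by simp
  moreover have "mask (2 * b) \<noteq> (0::nat)" using assms by simp
  ultimately show False
    using fun_cong[OF ket0, of 0] fun_cong[OF ket0, of "mask (2 * b)"] by (auto simp: ket0_def)
qed

definition z_rotation :: "complex \<Rightarrow> mat2" where
  "z_rotation u = (\<lambda>a c. if a = c then (if a then u else cnj u) else 0)"

definition antidiag_gate :: "complex \<Rightarrow> mat2" where
  "antidiag_gate e = (\<lambda>a c. if a = c then 0 else if a then - \<i> * e else - \<i> * cnj e)"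

definition monomial_root4 :: "mat2 \<Rightarrow> bool" where
  "monomial_root4 A \<longleftrightarrow>
     ((A False True = 0 \<and> A True False = 0) \<or> (A False False = 0 \<and> A True True = 0))
     \<and> (\<forall>a c. A a c = 0 \<or> A a c ^ 4 = 1)"

lemma monomial_root4_m2mult:
  assumes "monomial_root4 A" and "monomial_root4 B"
  shows "monomial_root4 (m2mult A B)"
proof -
  have shape: "(A False True = 0 \<and> A True False = 0) \<or> (A False False = 0 \<and> A True True = 0)"
    "(B False True = 0 \<and> B True False = 0) \<or> (B False False = 0 \<and> B True True = 0)"
    using assms unfolding monomial_root4_def by blast+
  have root: "A a c * B c d = 0 \<or> (A a c * B c d) ^ 4 = 1" for a c d
  proof -
    have "A a c = 0 \<or> A a c ^ 4 = 1" "B c d = 0 \<or> B c d ^ 4 = 1"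
      using assms unfolding monomial_root4_def by blast+
    then show ?thesis by (auto simp: power_mult_distrib)
  qed
  have "m2mult A B a c = A a False * B False c \<or> m2mult A B a c = A a True * B True c" for a c
    using shape unfolding m2mult_def by (cases a; cases c) auto
  then have "m2mult A B a c = 0 \<or> m2mult A B a c ^ 4 = 1" for a c
    using root by metis
  moreover have "(m2mult A B False True = 0 \<and> m2mult A B True False = 0)
      \<or> (m2mult A B False False = 0 \<and> m2mult A B True True = 0)"
    using shape unfolding m2mult_def by auto
  ultimately show ?thesis unfolding monomial_root4_def by blast
qed

lemma cliff1_monomial_root4: "A \<in> cliff1 \<Longrightarrow> monomial_root4 A"
proof (induction rule: cliff1.induct)
  case (mult A B)
  then show ?case using monomial_root4_m2mult by blast
qed (auto simp: monomial_root4_def m2id_def sX_def sZ_def)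

lemma conjugate_sX_antidiag_gate:
  "m2mult (m2mult (antidiag_gate e) sX) (m2adj (antidiag_gate e))
   = antidiag_gate (e ^ 2)"
  by (intro ext)
      (auto simp: m2mult_def m2adj_def antidiag_gate_def sX_def power2_eq_square algebra_simps)

lemma conjugate_sX_z_rotation:
  "m2mult (m2mult (z_rotation u) sX) (m2adj (z_rotation u))
   = antidiag_gate (u ^ 2)"
  by (intro ext)
      (auto simp: m2mult_def m2adj_def antidiag_gate_def z_rotation_def sX_def power2_eq_square)

lemma conjugate_sX_mem_cliff:
  "U \<in> cliff (Suc (Suc r))
    \<Longrightarrow> m2mult (m2mult U sX) (m2adj U) \<in> cliff (Suc r)"
  using cliff1.genX by simp

lemma antidiag_gate_mem_cliff_imp_root:
  assumes "antidiag_gate e \<in> cliff (Suc k)" and "e \<noteq> 0"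
  shows "e ^ (4 * 2 ^ k) = 1"
  using assms
proof (induction k arbitrary: e)
  case 0
  then have "antidiag_gate e True False = 0 \<or> antidiag_gate e True False ^ 4 = 1"
    using cliff1_monomial_root4[of "antidiag_gate e"] unfolding monomial_root4_def by simp
  then show ?case using 0 by (simp add: antidiag_gate_def power_mult_distrib)
next
  case (Suc k)
  then have "(e ^ 2) ^ (4 * 2 ^ k) = 1"
    using conjugate_sX_mem_cliff[of "antidiag_gate e"] by (simp add: conjugate_sX_antidiag_gate)
  then show ?case by (simp add: power_mult[symmetric] mult_ac)
qed

lemma z_rotation_mem_cliff_imp_root:
  assumes "z_rotation u \<in> cliff r" and "r \<ge> 1" and "u \<noteq> 0"
  shows "\<exists>j. u ^ 2 ^ j = 1"
proof -
  obtain k where r: "r = Suc k" using assms(2) by (cases r) auto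
  show ?thesis
  proof (cases k)
    case 0
    then have "z_rotation u False False = 0 \<or> z_rotation u False False ^ 4 = 1"
      using assms(1) cliff1_monomial_root4[of "z_rotation u"] r unfolding monomial_root4_def by simp
    then have "cnj (u ^ 4) = 1" using assms(3) by (simp add: z_rotation_def)
    then have "u ^ 4 = 1" by (metis complex_cnj_cnj complex_cnj_one)
    then have "u ^ 2 ^ 2 = 1" by simp
    then show ?thesis by blast
  next
    case (Suc k')
    then have "antidiag_gate (u ^ 2) \<in> cliff (Suc k')"
      using assms(1) r conjugate_sX_mem_cliff[of "z_rotation u"]
      by (simp add: conjugate_sX_z_rotation)
    then have "(u ^ 2) ^ (4 * 2 ^ k') = 1"
      using antidiag_gate_mem_cliff_imp_root assms(3) by simp
    then have "u ^ 2 ^ (k' + 3) = 1" by (simp add: power_mult[symmetric] power_add mult_ac)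
    then show ?thesis by blast
  qed
qed

lemma cis_pi_div_power_eq_1_imp_dvd:
  assumes "m > 0" and "cis (pi / real m) ^ N = 1"
  shows "2 * m dvd N"
proof -
  have "cos (real N * (pi / real m)) = 1"
    using assms(2) by (simp add: DeMoivre complex_eq_iff)
  then obtain z :: int where "real N * (pi / real m) = real_of_int z * 2 * pi"
    using cos_one_2pi_int by blast
  then have "real N = real_of_int z * 2 * real m"
    using assms(1) by (simp add: field_simps)
  then have "int N = z * 2 * int m"
    by (metis of_int_eq_iff of_int_mult of_int_of_nat_eq of_int_numeral)
  then have "int N = int (2 * m) * z" by simp
  then show ?thesis by (metis dvd_triv_left int_dvd_int_iff)
qed

lemma z_rotation_SU2:
  assumes "cmod u = 1"
  shows "z_rotation u \<in> SU2"
proof -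
  have "u * cnj u = 1" using complex_norm_square[of u] assms by simp
  then show ?thesis
    by (auto simp: SU2_def m2mult_def m2adj_def m2id_def m2det_def z_rotation_def
        fun_eq_iff mult.commute)
qed

lemma exotic_z_rotation:
  assumes "b \<ge> 1" and "\<forall>r::nat. b \<noteq> 2 ^ r"
  shows "exotic (z_rotation (cis (pi / real (2 * b))))"
  unfolding exotic_def
proof (intro conjI allI impI notI)
  show "z_rotation (cis (pi / real (2 * b))) \<in> SU2" by (simp add: z_rotation_SU2)
  fix r :: nat assume "r \<ge> 1" "z_rotation (cis (pi / real (2 * b))) \<in> cliff r"
  then obtain j where "cis (pi / real (2 * b)) ^ 2 ^ j = 1"
    using z_rotation_mem_cliff_imp_root by fastforce
  then have "b dvd 2 ^ j"
    using cis_pi_div_power_eq_1_imp_dvd[of "2 * b"] assms(1) dvd_mult_right by fastforce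
  then show False
    using assms(2) divides_primepow_nat[of 2 b j] by auto
qed

lemma qapply_tensor_power_z_rotation:
  "qapply n (tensor_power n (z_rotation u)) v i
     = (if i < 2 ^ n then u ^ hweight n i * cnj u ^ (n - hweight n i) * v i else 0)"
proof (cases "i < 2 ^ n")
  case True
  have "tensor_power n (z_rotation u) i j = 0" if "j < 2 ^ n" "j \<noteq> i" for j
  proof -
    obtain k where k: "bit j k \<noteq> bit i k" using \<open>j \<noteq> i\<close> bit_eq_iff by blast
    then have "k < n" using bit_less_power that(1) True by blast
    then show ?thesis using k that True by (auto simp: tensor_power_def z_rotation_def)
  qed
  then have "(\<Sum>j<2 ^ n. tensor_power n (z_rotation u) i j * v j)
      = tensor_power n (z_rotation u) i i * v i"
    using True by (subst sum.remove[of _ i]) auto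
  moreover have "(\<Prod>k<n. z_rotation u (bit i k) (bit i k))
      = u ^ hweight n i * cnj u ^ (n - hweight n i)"
  proof -
    have "(\<Prod>k<n. z_rotation u (bit i k) (bit i k))
        = (\<Prod>k\<in>{..<n} \<inter> {k. bit i k}. u)
        * (\<Prod>k\<in>{..<n} \<inter> - {k. bit i k}. cnj u)"
      unfolding z_rotation_def by (simp add: prod.If_cases)
    moreover have "{..<n} \<inter> {k. bit i k} = qubit_set n i"
        "{..<n} \<inter> - {k. bit i k} = {..<n} - qubit_set n i"
      by (auto simp: qubit_set_def)
    ultimately show ?thesis
      by (simp add: hweight_qubit_set card_Diff_subset qubit_set_subset)
  qed
  ultimately show ?thesis
    using True by (simp add: qapply_def tensor_power_def)
qed (simp add: qapply_def)

lemma qapply_tensor_power_z_rotation_eigen: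
  assumes "\<And>i. v i \<noteq> 0 \<Longrightarrow> i < 2 ^ n \<and> u ^ hweight n i * cnj u ^ (n - hweight n i) = c"
  shows "qapply n (tensor_power n (z_rotation u)) v = (\<lambda>i. c * v i)"
proof
  fix i
  show "qapply n (tensor_power n (z_rotation u)) v i = c * v i"
    using assms[of i] by (cases "v i = 0") (auto simp: qapply_tensor_power_z_rotation)
qed

lemma span2_invariant_tensor_power_z_rotation:
  assumes "b \<ge> 1" and "v \<in> span2 (codeword0 b) (codeword1 b)"
  shows "qapply (2 * b + 3) (tensor_power (2 * b + 3) (z_rotation (cis (pi / real (2 * b))))) v
           \<in> span2 (codeword0 b) (codeword1 b)"
proof -
  let ?n = "2 * b + 3"
  define u where "u = cis (pi / real (2 * b))"
  have u_2b: "u ^ (2 * b) = -1" and cnj_u_2b: "cnj u ^ (2 * b) = -1"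
    using assms(1) by (simp_all add: u_def DeMoivre flip: complex_cnj_power)
  have "qapply ?n (tensor_power ?n (z_rotation u)) (codeword0 b)
      = (\<lambda>i. - (cnj u ^ 3) * codeword0 b i)"
    by (rule qapply_tensor_power_z_rotation_eigen)
       (use codeword0_neq_0_imp u_2b cnj_u_2b in \<open>fastforce simp: power_add\<close>)
  moreover have "qapply ?n (tensor_power ?n (z_rotation u)) (codeword1 b)
      = (\<lambda>i. - (u ^ 3) * codeword1 b i)"
    by (rule qapply_tensor_power_z_rotation_eigen)
       (use codeword1_neq_0_imp u_2b cnj_u_2b in \<open>fastforce simp: power_add\<close>)
  moreover obtain \<alpha> \<beta> where "v = (\<lambda>i. \<alpha> * codeword0 b i + \<beta> * codeword1 b i)"
    using assms(2) by (auto simp: span2_def)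
  ultimately have "qapply ?n (tensor_power ?n (z_rotation u)) v
      = (\<lambda>i. (- (cnj u ^ 3) * \<alpha>) * codeword0 b i + (- (u ^ 3) * \<beta>) * codeword1 b i)"
    by (simp add: qapply_lincomb mult_ac)
  then show ?thesis unfolding span2_def u_def by blast
qed

theorem mainTheorem6:
  fixes b :: nat
  assumes "b \<ge> 1"
    and "\<forall>r::nat. b \<noteq> 2 ^ r"
    and "\<forall>r::nat. b \<noteq> 3 * 2 ^ r"
  shows "is_code_n2d (2 * b + 3) 3 (codeword0 b) (codeword1 b)
         \<and> perm_invariant (2 * b + 3) (span2 (codeword0 b) (codeword1 b))
         \<and> non_additive (2 * b + 3) (span2 (codeword0 b) (codeword1 b))
         \<and> has_exotic_transversal (2 * b + 3) (span2 (codeword0 b) (codeword1 b))"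
proof -
  have "b \<noteq> 1" "b \<noteq> 2"
    using assms(2)[rule_format, of 0] assms(2)[rule_format, of 1] by simp_all
  then have "b \<ge> 3" using assms(1) by linarith
  have "has_exotic_transversal (2 * b + 3) (span2 (codeword0 b) (codeword1 b))"
    unfolding has_exotic_transversal_def
    using exotic_z_rotation[OF assms(1,2)]
        span2_invariant_tensor_power_z_rotation[OF assms(1)] by blast
  then show ?thesis
    using is_code_codewords[OF \<open>b \<ge> 3\<close>]
        perm_invariant_codewords non_additive_codewords \<open>b \<ge> 3\<close> by simp
qed

end
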